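(* Let $m\ge3$, let $w_0^2(m)=\big(\sum_{l=1}^{m-1}\frac{m-l}{l^2}\big)^{-1}$, for $k\ge0$ let $w_{k+1}^2(m)=w_k^2(m)+\big(\sum_{l=1}^{m-1}\frac{m-l}{l^2-w_k^2(m)}\big)^{-1}$ with $w_k(m)>0$, and put $\varepsilon_k(m)=1-w_k(m)$ and $q(m)=\frac{7m-6}{7m-4}$. Then for all $k=0,1,2,\dots$, $$\varepsilon_{k+1}(m)<\varepsilon_k(m)\,q(m),$$ and consequently $\varepsilon_{k+1}(m)<\varepsilon_0(m)\,q(m)^k$, where $\varepsilon_0(m)=1-\big[m\frac{\pi^2}{6}-m\psi'(m)-\gamma-\psi(m)\big]^{-1/2}\in(0,1)$.
   Context: $\psi$ denotes the digamma function and $\gamma$ the Euler–Mascheroni constant. *)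

theory Defs
  imports "HOL-Analysis.Analysis"
begin

fun wsq :: "nat \<Rightarrow> nat \<Rightarrow> real" where
  "wsq m 0 = 1 / (\<Sum>l=1..m-1. (real m - real l) / (real l)^2)"
| "wsq m (Suc k) = wsq m k + 1 / (\<Sum>l=1..m-1. (real m - real l) / ((real l)^2 - wsq m k))"

definition w :: "nat \<Rightarrow> nat \<Rightarrow> real" where
  "w m k = sqrt (wsq m k)"

definition eps :: "nat \<Rightarrow> nat \<Rightarrow> real" where
  "eps m k = 1 - w m k"

definition q :: "nat \<Rightarrow> real" where
  "q m = (7 * real m - 6) / (7 * real m - 4)"

end

theory Submission
  imports Defs
begin

text \<open>Writing \<open>S(x) = \<Sum>\<^sub>l (m - l)/(l\<^sup>2 - x)\<close>, the recursion reads \<open>w\<^sub>k\<^sub>+\<^sub>1\<^sup>2 = w\<^sub>k\<^sup>2 + 1/S(w\<^sub>k\<^sup>2)\<close>.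
  For \<open>0 \<le> x < 1\<close> the term \<open>l = 1\<close> gives \<open>S(x) \<ge> (m - 1)/(1 - x)\<close>, and the remaining terms add
  at most \<open>m \<Sum>\<^sub>l\<^sub>\<ge>\<^sub>2 1/(l(l - 1)) < m\<close>. Hence the increment \<open>1/S(x)\<close> lies between
  \<open>(1 - x)/(2m - 1)\<close> and \<open>(1 - x)/(m - 1)\<close>: the iterates stay in \<open>(0, 1)\<close>, and each step removes
  a fixed fraction of \<open>1 - x = (1 - \<surd>x)(1 + \<surd>x)\<close>, which contracts \<open>1 - \<surd>x\<close> by the factor
  \<open>q(m)\<close>. The closed form of \<open>\<epsilon>\<^sub>0\<close> comes from \<open>\<psi>(n + 1) = H\<^sub>n - \<gamma>\<close> and
  \<open>\<psi>'(n + 1) = \<zeta>(2) - \<Sum>\<^sub>k\<^sub>\<le>\<^sub>n 1/k\<^sup>2\<close>.\<close>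

definition wsq_den :: "nat \<Rightarrow> real \<Rightarrow> real" where
  "wsq_den m x = (\<Sum>l=1..m-1. (real m - real l) / ((real l)^2 - x))"

declare wsq.simps [simp del]

lemma wsq_0_eq: "wsq m 0 = 1 / wsq_den m 0"
  by (simp add: wsq.simps wsq_den_def)

lemma wsq_Suc_eq: "wsq m (Suc k) = wsq m k + 1 / wsq_den m (wsq m k)"
  by (simp add: wsq.simps wsq_den_def)

lemma sum_inverse_consecutive_products:
  assumes "n \<ge> 1"
  shows "(\<Sum>l=2..n. 1 / (real l * (real l - 1))) = 1 - 1 / real n"
  using assms
proof (induction n rule: dec_induct)
  case base
  then show ?case by simp
next
  case (step n)
  have "{2..Suc n} = insert (Suc n) {2..n}"
    using step.hyps by auto
  then have "(\<Sum>l=2..Suc n. 1 / (real l * (real l - 1)))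
      = 1 / (real (Suc n) * real n) + (1 - 1 / real n)"
    using step.IH by simp
  also have "\<dots> = 1 - 1 / real (Suc n)"
  proof -
    have "0 < real n"
      using step.hyps by simp
    then have "real n + real n * real n \<noteq> 0"
      using mult_pos_pos[of "real n" "real n"] by linarith
    then show ?thesis
      using \<open>0 < real n\<close> by (simp add: field_simps)
  qed
  finally show ?case .
qed

lemma wsq_den_split:
  assumes "m \<ge> 2"
  shows "wsq_den m x = (real m - 1) / (1 - x) + (\<Sum>l=2..m-1. (real m - real l) / ((real l)^2 - x))"
proof -
  have "{1..m-1} = insert 1 {2..m-1}"
    using assms by auto
  then show ?thesis
    by (simp add: wsq_den_def)
qed

lemma wsq_den_tail_nonneg:
  assumes "x < 1"
  shows "0 \<le> (\<Sum>l=2..m-1. (real m - real l) / ((real l)^2 - x))"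
proof (intro sum_nonneg divide_nonneg_pos)
  fix l assume l: "l \<in> {2..m-1}"
  then have "(1::real) < (real l)^2"
    by (simp add: less_1_mult power2_eq_square)
  then show "0 < (real l)^2 - x"
    using assms by linarith
  show "0 \<le> real m - real l"
    using l by auto
qed

lemma wsq_den_tail_le:
  assumes "m \<ge> 2" "x < 1"
  shows "(\<Sum>l=2..m-1. (real m - real l) / ((real l)^2 - x)) \<le> real m"
proof -
  have term_le: "(real m - real l) / ((real l)^2 - x) \<le> real m * (1 / (real l * (real l - 1)))"
    if l: "l \<in> {2..m-1}" for l
  proof -
    have pos: "real l * (real l - 1) > 0"
      using l by auto
    have le: "real l * (real l - 1) \<le> (real l)^2 - x"
      using l assms(2) by (simp add: power2_eq_square algebra_simps)
    have den: "0 < (real l)^2 - x"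
      using pos le by linarith
    have "(real m - real l) / ((real l)^2 - x) \<le> (real m - real l) / (real l * (real l - 1))"
      by (intro divide_left_mono le mult_pos_pos den pos) (use l in auto)
    also have "\<dots> \<le> real m / (real l * (real l - 1))"
      using pos by (intro divide_right_mono) auto
    finally show ?thesis by simp
  qed
  have "(\<Sum>l=2..m-1. (real m - real l) / ((real l)^2 - x))
      \<le> real m * (\<Sum>l=2..m-1. 1 / (real l * (real l - 1)))"
    unfolding sum_distrib_left by (rule sum_mono) (rule term_le)
  also have "\<dots> = real m * (1 - 1 / real (m - 1))"
    using assms by (simp add: sum_inverse_consecutive_products)
  also have "\<dots> \<le> real m"
    by (simp add: right_diff_distrib)
  finally show ?thesis .
qed

lemma wsq_den_bounds:
  assumes "m \<ge> 2" "x < 1"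
  shows "(real m - 1) / (1 - x) \<le> wsq_den m x"
    and "wsq_den m x \<le> (real m - 1) / (1 - x) + real m"
  using wsq_den_split[of m x] wsq_den_tail_nonneg[of x m] wsq_den_tail_le[of m x] assms
  by linarith+

lemma inverse_wsq_den_bounds:
  assumes "m \<ge> 2" "0 \<le> x" "x < 1"
  shows "(1 - x) / (2 * real m - 1) \<le> 1 / wsq_den m x"
    and "1 / wsq_den m x \<le> (1 - x) / (real m - 1)"
proof -
  have pos: "0 < (real m - 1) / (1 - x)"
    using assms by simp
  have den_pos: "0 < wsq_den m x"
    using wsq_den_bounds(1)[of m x] assms pos by linarith
  have "1 / wsq_den m x \<le> 1 / ((real m - 1) / (1 - x))"
    using wsq_den_bounds(1)[of m x] assms pos den_pos by (intro divide_left_mono mult_pos_pos) auto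
  then show "1 / wsq_den m x \<le> (1 - x) / (real m - 1)"
    by simp
  have "real m - 1 + real m * (1 - x) \<le> 2 * real m - 1"
    using assms by (simp add: algebra_simps)
  moreover have "0 < real m - 1 + real m * (1 - x)"
    using assms by (simp add: add_pos_pos)
  ultimately have "(1 - x) / (2 * real m - 1) \<le> (1 - x) / (real m - 1 + real m * (1 - x))"
    using assms by (intro divide_left_mono mult_pos_pos) auto
  also have "\<dots> = 1 / ((real m - 1) / (1 - x) + real m)"
    using assms by (simp add: field_simps)
  also have "\<dots> \<le> 1 / wsq_den m x"
    using wsq_den_bounds[of m x] assms pos den_pos by (intro divide_left_mono) auto
  finally show "(1 - x) / (2 * real m - 1) \<le> 1 / wsq_den m x" .
qed

lemma wsq_increment_bounds:
  assumes "m \<ge> 3" "0 \<le> x" "x < 1"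
  shows "0 < 1 / wsq_den m x" "x + 1 / wsq_den m x < 1"
proof -
  have "0 < (1 - x) / (2 * real m - 1)" "(1 - x) / (real m - 1) < 1 - x"
    using assms by (auto simp: divide_less_eq)
  then show "0 < 1 / wsq_den m x" "x + 1 / wsq_den m x < 1"
    using inverse_wsq_den_bounds[of m x] assms by linarith+
qed

text \<open>With \<open>e = 1 - \<surd>x\<close> one has \<open>(1 - c e)\<^sup>2 = x + (1 - c) e (2 - e - c e)\<close> and \<open>e (2 - e) = 1 - x\<close>.\<close>
lemma one_minus_sqrt_contraction:
  fixes x y c :: real
  assumes "0 \<le> x" "x < 1" "0 < c" "c < 1" "(1 - c) * (1 - x) \<le> y"
  shows "1 - sqrt (x + y) < (1 - sqrt x) * c"
proof -
  define e where "e = 1 - sqrt x"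
  have e: "0 < e" "e \<le> 1"
    using assms(1,2) by (auto simp: e_def)
  have x_eq: "x = (1 - e)^2"
    using assms(1) by (simp add: e_def)
  have "(1 - c * e)^2 = x + (1 - c) * e * (2 - e - c * e)"
    unfolding x_eq by (simp add: power2_eq_square algebra_simps)
  also have "\<dots> < x + (1 - c) * e * (2 - e)"
    using e assms(3,4) by (intro add_strict_left_mono mult_strict_left_mono) auto
  also have "\<dots> = x + (1 - c) * (1 - x)"
    unfolding x_eq by (simp add: power2_eq_square algebra_simps)
  also have "\<dots> \<le> x + y"
    using assms(5) by simp
  finally have "(1 - c * e)^2 < x + y" .
  moreover have "0 \<le> 1 - c * e"
    using e assms(3,4) mult_le_one[of c e] by simp
  ultimately have "1 - c * e < sqrt (x + y)"
    by (simp add: real_less_rsqrt)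
  then show ?thesis
    by (simp add: e_def mult.commute)
qed

lemma q_bounds:
  assumes "m \<ge> 1"
  shows "0 < q m" "q m < 1" "1 - q m \<le> 1 / (2 * real m - 1)"
proof -
  have m: "real m \<ge> 1"
    using assms by simp
  then show "0 < q m" "q m < 1"
    by (simp_all add: q_def divide_less_eq)
  have "1 - q m = 2 / (7 * real m - 4)"
    using m by (simp add: q_def field_simps)
  also have "\<dots> \<le> 1 / (2 * real m - 1)"
    using m by (simp add: divide_simps)
  finally show "1 - q m \<le> 1 / (2 * real m - 1)" .
qed

lemma wsq_bounds:
  assumes "m \<ge> 3"
  shows "0 < wsq m k \<and> wsq m k < 1"
proof (induction k)
  case 0
  then show ?case
    using wsq_increment_bounds[OF assms, of 0] by (simp add: wsq_0_eq)
next
  case (Suc k)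
  then show ?case
    using wsq_increment_bounds[OF assms, of "wsq m k"] unfolding wsq_Suc_eq by linarith
qed

lemma eps_bounds:
  assumes "m \<ge> 3"
  shows "0 < eps m k" "eps m k < 1"
  using wsq_bounds[OF assms, of k] by (auto simp: eps_def w_def real_sqrt_lt_1_iff)

lemma eps_Suc_less:
  assumes "m \<ge> 3"
  shows "eps m (Suc k) < eps m k * q m"
proof -
  let ?x = "wsq m k"
  have x: "0 \<le> ?x" "?x < 1"
    using wsq_bounds[OF assms] by (simp_all add: less_imp_le)
  have "(1 - q m) * (1 - ?x) \<le> (1 - ?x) / (2 * real m - 1)"
    using q_bounds(3)[of m] x assms by (simp add: mult_right_mono divide_inverse mult.commute)
  also have "\<dots> \<le> 1 / wsq_den m ?x"
    using inverse_wsq_den_bounds(1)[of m ?x] x assms by simp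
  finally have "1 - sqrt (?x + 1 / wsq_den m ?x) < (1 - sqrt ?x) * q m"
    using assms by (intro one_minus_sqrt_contraction x q_bounds) auto
  then show ?thesis
    by (simp only: eps_def w_def wsq_Suc_eq)
qed

lemma Polygamma_1_1: "Polygamma 1 (1::real) = pi^2 / 6"
proof -
  have "Polygamma 1 (1::real) = (\<Sum>k. 1 / (real k + 1)^2)"
    by (simp add: Polygamma_def power2_eq_square inverse_eq_divide add.commute)
  also have "\<dots> = pi^2 / 6"
    using inverse_squares_sums by (simp add: sums_iff add.commute)
  finally show ?thesis .
qed

lemma Polygamma_1_of_nat_Suc:
  "Polygamma 1 (real (Suc n)) = pi^2 / 6 - (\<Sum>k<n. 1 / (real k + 1)^2)"
proof -
  have "Polygamma 1 (1 + real n) = Polygamma 1 1 + (-1) ^ 1 * fact 1 * (\<Sum>k<n. 1 / (1 + real k) ^ Suc 1)"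
    by (rule Polygamma_plus_of_nat) auto
  then show ?thesis
    unfolding Polygamma_1_1 by (simp add: add.commute power2_eq_square)
qed

lemma wsq_den_0_eq:
  assumes "m \<ge> 1"
  shows "wsq_den m 0 = real m * pi^2 / 6 - real m * Polygamma 1 (real m)
                        - euler_mascheroni - Digamma (real m)"
proof -
  obtain n where m: "m = Suc n"
    using assms by (cases m) auto
  have term_eq: "(real m - real (Suc k)) / (real (Suc k))^2 = real m * (1 / (real k + 1)^2) - 1 / (real k + 1)"
    for k
  proof -
    have "(real m - real (Suc k)) / (real (Suc k))^2 = real m / (real k + 1)^2 - (real k + 1) / (real k + 1)^2"
      by (simp add: diff_divide_distrib add.commute)
    also have "(real k + 1) / (real k + 1)^2 = 1 / (real k + 1)"
      by (simp add: power2_eq_square)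
    finally show ?thesis
      by simp
  qed
  have "{1..m-1} = {Suc 0..n}"
    using m by simp
  then have "wsq_den m 0 = (\<Sum>k<n. (real m - real (Suc k)) / (real (Suc k))^2)"
    by (simp only: wsq_den_def sum.atLeast1_atMost_eq diff_zero)
  also have "\<dots> = (\<Sum>k<n. real m * (1 / (real k + 1)^2) - 1 / (real k + 1))"
    by (simp only: term_eq)
  also have "\<dots> = real m * (\<Sum>k<n. 1 / (real k + 1)^2) - harm n"
    by (simp add: sum_subtractf sum_distrib_left harm_altdef inverse_eq_divide add.commute)
  finally show ?thesis
    unfolding m Polygamma_1_of_nat_Suc Digamma_of_nat by (simp add: algebra_simps)
qed

lemma geometric_decay:
  fixes e :: "nat \<Rightarrow> real"
  assumes step: "\<And>k. e (Suc k) < e k * c" and "0 \<le> c"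
  shows "e (Suc k) < e 0 * c ^ Suc k"
proof (induction k)
  case 0
  then show ?case using step[of 0] by simp
next
  case (Suc k)
  have "e (Suc (Suc k)) < e (Suc k) * c"
    by (rule step)
  also have "\<dots> \<le> e 0 * c ^ Suc k * c"
    using Suc assms(2) by (intro mult_right_mono) auto
  finally show ?case
    by (simp add: mult_ac)
qed

theorem corollary4:
  fixes m :: nat
  assumes "m \<ge> 3"
  shows "(\<forall>k. eps m (Suc k) < eps m k * q m)
    \<and> (\<forall>k. eps m (Suc k) < eps m 0 * q m ^ k)
    \<and> eps m 0 = 1 - (real m * pi^2 / 6 - real m * Polygamma 1 (real m)
                        - euler_mascheroni - Digamma (real m)) powr (-1/2)
    \<and> 0 < eps m 0 \<and> eps m 0 < 1"
proof -
  have step: "eps m (Suc k) < eps m k * q m" for k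
    using eps_Suc_less[OF assms] .
  have q: "0 < q m" "q m < 1"
    using q_bounds assms by auto
  have geom: "eps m (Suc k) < eps m 0 * q m ^ k" for k
  proof -
    have "eps m (Suc k) < eps m 0 * q m ^ Suc k"
      using geometric_decay[of "eps m" "q m"] step q by auto
    also have "\<dots> \<le> eps m 0 * q m ^ k"
      using eps_bounds(1)[OF assms] q by (simp add: power_decreasing_iff)
    finally show ?thesis .
  qed
  have den_pos: "0 < wsq_den m 0"
    using wsq_bounds[OF assms, of 0] by (simp add: wsq_0_eq)
  have eps_0: "eps m 0 = 1 - wsq_den m 0 powr (-1/2)"
    using den_pos by (simp add: eps_def w_def wsq_0_eq powr_minus_divide powr_half_sqrt real_sqrt_divide)
  have m1: "m \<ge> 1"
    using assms by simp
  show ?thesis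
    using step geom eps_bounds[OF assms] eps_0[unfolded wsq_den_0_eq[OF m1]] by blast
qed

end
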